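(* Consider a discounted MDP with finite state space $\mathcal{S}$, finite action space $\mathcal{A}$, transition matrix $P\in\mathbb{R}_+^{|\mathcal{S}||\mathcal{A}|\times|\mathcal{S}|}$ with $P_{sa,\tilde s}=\Pr(\tilde s\mid s,a)$, initial state distribution $\mu_0$ and discount factor $\gamma\in[0,1)$, and a differentiable parametrized policy $\theta\mapsto\pi_\theta$ with $\theta\in\mathbb{R}^p$. Let $\Upsilon\in\mathbb{R}^{p\times|\mathcal{S}||\mathcal{A}|}$ be the matrix $\Upsilon_{i,sa}=\partial d_\theta(s,a)/\partial\theta_i$. Then $$\Upsilon=H_\theta\,\Delta(\Xi^\top d_{\mathcal{S},\theta})\,\Psi_\theta^{-1},$$ where $\Psi_\theta=I-\gamma P\Pi_\theta$.
   Context: The policy $\pi_\theta\in\mathbb{R}_+^{|\mathcal{S}||\mathcal{A}|}$ has entries $\pi_\theta(s,a)$, normalized in each state. $\Pi_\theta\in\mathbb{R}^{|\mathcal{S}|\times|\mathcal{S}||\mathcal{A}|}$ is block-diagonal with row $s$ containing $\pi_\theta(s,\cdot)^\top$ in the block of state $s$, so $(\Pi_\theta v)(s)=\sum_a\pi_\theta(s,a)v(s,a)$. $d_\theta(s,a)=(1-\gamma)\sum_{i\ge0}\gamma^i\Pr(S_i=s,A_i=a)$ is the discounted state-action visitation distribution with $S_0\sim\mu_0$, actions from $\pi_\theta$ and transitions from $P$; $d_{\mathcal{S},\theta}(s)=\sum_a d_\theta(s,a)$. $H_\theta\in\mathbb{R}^{p\times|\mathcal{S}||\mathcal{A}|}$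 is the actor Jacobian $(H_\theta)_{i,sa}=\partial\pi_\theta(s,a)/\partial\theta_i$. $\Xi\in\mathbb{R}^{|\mathcal{S}|\times|\mathcal{S}||\mathcal{A}|}$ is the marginalization matrix (block-diagonal with blocks $\mathbf{1}_{|\mathcal{A}|}^\top$), so $\Xi^\top d_{\mathcal{S},\theta}$ is the vector with $(s,a)$-entry $d_{\mathcal{S},\theta}(s)$. $\Delta(v)$ is the diagonal matrix with $v$ on its diagonal. *)

theory Defs
  imports "HOL-Analysis.Analysis"
begin

text \<open>State-action pairs are indexed by the finite type ('s \<times> 'a).
  Vectors/matrices are HOL-Analysis Cartesian vectors: an m\<times>n matrix is real^'n^'m.\<close>

text \<open>Pr(S_i = s, A_i = a) for the Markov chain with S_0 ~ mu0, A_i ~ pi(S_i,.),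
  S_{i+1} ~ P(S_i,A_i,.).\<close>
fun sa_prob :: "('s::finite \<Rightarrow> real) \<Rightarrow> ('s \<times> 'a::finite \<Rightarrow> 's \<Rightarrow> real)
      \<Rightarrow> ('s \<Rightarrow> 'a \<Rightarrow> real) \<Rightarrow> nat \<Rightarrow> 's \<times> 'a \<Rightarrow> real" where
  "sa_prob mu0 P pol 0 (s, a) = mu0 s * pol s a"
| "sa_prob mu0 P pol (Suc i) (s', a') =
     (\<Sum>sa\<in>UNIV. sa_prob mu0 P pol i sa * P sa s') * pol s' a'"

definition visit :: "real \<Rightarrow> ('s::finite \<Rightarrow> real) \<Rightarrow> ('s \<times> 'a::finite \<Rightarrow> 's \<Rightarrow> real)
      \<Rightarrow> ('s \<Rightarrow> 'a \<Rightarrow> real) \<Rightarrow> real^('s \<times> 'a)" where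
  "visit \<gamma> mu0 P pol = (\<chi> sa. (1 - \<gamma>) * (\<Sum>i. \<gamma> ^ i * sa_prob mu0 P pol i sa))"

definition visit_S :: "real \<Rightarrow> ('s::finite \<Rightarrow> real) \<Rightarrow> ('s \<times> 'a::finite \<Rightarrow> 's \<Rightarrow> real)
      \<Rightarrow> ('s \<Rightarrow> 'a \<Rightarrow> real) \<Rightarrow> real^'s" where
  "visit_S \<gamma> mu0 P pol = (\<chi> s. \<Sum>a\<in>UNIV. visit \<gamma> mu0 P pol $ (s, a))"

definition trans_mat :: "('s::finite \<times> 'a::finite \<Rightarrow> 's \<Rightarrow> real) \<Rightarrow> real^'s^('s \<times> 'a)" where
  "trans_mat P = (\<chi> sa s'. P sa s')"

definition policy_mat :: "('s::finite \<Rightarrow> 'a::finite \<Rightarrow> real) \<Rightarrow> real^('s \<times> 'a)^'s" where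
  "policy_mat pol = (\<chi> s sa. if fst sa = s then pol s (snd sa) else 0)"

definition marg_mat :: "real^('s::finite \<times> 'a::finite)^'s" where
  "marg_mat = (\<chi> s sa. if fst sa = s then 1 else 0)"

definition diag_mat :: "real^'n::finite \<Rightarrow> real^'n^'n" where
  "diag_mat v = (\<chi> i j. if i = j then v $ i else 0)"

definition partial_deriv :: "(real^'p::finite \<Rightarrow> real) \<Rightarrow> real^'p \<Rightarrow> 'p \<Rightarrow> real" where
  "partial_deriv f \<theta> i = deriv (\<lambda>t. f (\<theta> + t *\<^sub>R axis i 1)) 0"

definition actor_jacobian :: "(real^'p::finite \<Rightarrow> 's::finite \<Rightarrow> 'a::finite \<Rightarrow> real)
      \<Rightarrow> real^'p \<Rightarrow> real^('s \<times> 'a)^'p" where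
  "actor_jacobian pol \<theta> = (\<chi> i sa. partial_deriv (\<lambda>\<theta>'. pol \<theta>' (fst sa) (snd sa)) \<theta> i)"

end

theory Submission
  imports Defs
begin

(* The visitation distribution satisfies the flow equations d(s,a) = d_S(s) pi(s,a) and
   d_S = (1 - gamma) mu0 + gamma P^T d.  Subtracting them for two policies pi and pi' gives
   the exact identity

     (d' - d) Psi_pi = w,   w(s,a) = d_S'(s) (pi'(s,a) - pi(s,a)),

   with the row vector d' - d, and Psi_pi = I - gamma P Pi_pi is invertible because
   P Pi_pi is row-stochastic and gamma < 1.  Along a curve of policies pi_t the identity
   first shows that d, hence d_S, depends continuously on t (d_S is bounded, so w -> 0);
   dividing it by t and letting t -> 0 then gives the derivative (d_S o dpi/dt) Psi^-1,
   which is the claimed formula for dpi/dt = H_theta e_i.  No series is differentiated. *)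

lemma sum_UNIV_prod:
  "(\<Sum>x\<in>UNIV. f x) = (\<Sum>s\<in>UNIV. \<Sum>a\<in>UNIV. f (s, a))"
  using sum.cartesian_product'[of f UNIV UNIV] by simp

lemma invertible_mat_1_minus_scaleR:
  fixes M :: "real^'n::finite^'n"
  assumes row_sum: "\<And>i. (\<Sum>j\<in>UNIV. \<bar>M$i$j\<bar>) \<le> 1" and g: "\<bar>g\<bar> < 1"
  shows "invertible (mat 1 - g *\<^sub>R M)"
  unfolding invertible_left_inverse matrix_left_invertible_ker
proof (intro allI impI)
  fix x :: "real^'n"
  assume "(mat 1 - g *\<^sub>R M) *v x = 0"
  then have fixpoint: "x = g *\<^sub>R (M *v x)"
    by (simp add: matrix_vector_mult_diff_rdistrib scaleR_matrix_vector_assoc)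
  have "Max (range (\<lambda>j. \<bar>x$j\<bar>)) \<in> range (\<lambda>j. \<bar>x$j\<bar>)"
    by (rule Max_in) auto
  then obtain i where i_max: "Max (range (\<lambda>j. \<bar>x$j\<bar>)) = \<bar>x$i\<bar>"
    by blast
  have max: "\<bar>x$j\<bar> \<le> \<bar>x$i\<bar>" for j
    unfolding i_max[symmetric] by (rule Max_ge) auto
  have "\<bar>(M *v x)$i\<bar> \<le> (\<Sum>j\<in>UNIV. \<bar>M$i$j\<bar> * \<bar>x$i\<bar>)"
    unfolding matrix_vector_mult_def vec_lambda_beta
    by (intro order.trans[OF sum_abs] sum_mono) (simp add: abs_mult mult_left_mono max)
  also have "\<dots> \<le> \<bar>x$i\<bar>"
    using mult_right_mono[OF row_sum abs_ge_zero] by (simp add: sum_distrib_right[symmetric])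
  finally have "\<bar>x$i\<bar> \<le> \<bar>g\<bar> * \<bar>x$i\<bar>"
    by (subst fixpoint) (simp add: abs_mult mult_left_mono)
  then have "(1 - \<bar>g\<bar>) * \<bar>x$i\<bar> \<le> 0"
    by (simp add: algebra_simps)
  then have "\<bar>x$i\<bar> = 0"
    using g by (simp add: mult_le_0_iff)
  then show "x = 0"
    using max by (simp add: vec_eq_iff)
qed

lemma matrix_inv_right:
  fixes A :: "'a::semiring_1^'n::finite^'m::finite"
  assumes "invertible A"
  shows "A ** matrix_inv A = mat 1"
  using someI_ex[OF assms[unfolded invertible_def]] unfolding matrix_inv_def by blast

lemma matrix_mult_diag_marg_entry:
  fixes v :: "real^'s::finite" and H :: "real^('s \<times> 'a::finite)^'p::finite"
  shows "(H ** diag_mat (transpose marg_mat *v v) ** Q) $ i $ j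
     = (\<Sum>k\<in>UNIV. H$i$k * v$fst k * Q$k$j)"
proof -
  have marg: "(transpose marg_mat *v v) $ k = v $ fst k" for k :: "'s \<times> 'a"
    by (simp add: matrix_vector_mult_def transpose_def marg_mat_def
        if_distrib[where f="\<lambda>y. y * _"] cong: if_cong)
  have "(H ** diag_mat (transpose marg_mat *v v)) $ i $ k = H$i$k * v$fst k" for k
    unfolding matrix_matrix_mult_def diag_mat_def vec_lambda_beta
    using marg[of k] by (simp add: if_distrib[where f="\<lambda>y. _ * y"] cong: if_cong)
  then show ?thesis
    by (simp add: matrix_matrix_mult_def)
qed

lemma trans_mat_policy_mat_entry:
  "(trans_mat P ** policy_mat pol) $ k $ (s, a) = P k s * pol s a"
  by (simp add: matrix_matrix_mult_def trans_mat_def policy_mat_def if_distrib cong: if_cong)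

lemma has_real_derivative_partial_deriv:
  assumes "f differentiable (at \<theta>)"
  shows "((\<lambda>t. f (\<theta> + t *\<^sub>R axis i 1)) has_real_derivative partial_deriv f \<theta> i) (at 0)"
proof -
  have "(\<lambda>t. \<theta> + t *\<^sub>R axis i 1) differentiable (at 0)"
    by (auto intro!: derivative_intros)
  then have "(\<lambda>t. f (\<theta> + t *\<^sub>R axis i 1)) differentiable (at 0)"
    using differentiable_compose[of f "\<lambda>t. \<theta> + t *\<^sub>R axis i 1" 0] assms by simp
  then show ?thesis
    unfolding partial_deriv_def by (simp add: DERIV_deriv_iff_real_differentiable)
qed

definition stochastic_policy :: "('s \<Rightarrow> 'a::finite \<Rightarrow> real) \<Rightarrow> bool" where
  "stochastic_policy pol \<longleftrightarrow> (\<forall>s a. 0 \<le> pol s a) \<and> (\<forall>s. (\<Sum>a\<in>UNIV. pol s a) = 1)"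

locale discounted_mdp =
  fixes P :: "'s::finite \<times> 'a::finite \<Rightarrow> 's \<Rightarrow> real" and mu0 :: "'s \<Rightarrow> real" and \<gamma> :: real
  assumes P_nonneg: "\<And>sa s'. 0 \<le> P sa s'"
    and P_stoch: "\<And>sa. (\<Sum>s'\<in>UNIV. P sa s') = 1"
    and mu0_nonneg: "\<And>s. 0 \<le> mu0 s"
    and mu0_sum: "(\<Sum>s\<in>UNIV. mu0 s) = 1"
    and gamma_nonneg: "0 \<le> \<gamma>"
    and gamma_less_1: "\<gamma> < 1"
begin

definition flow_mat :: "('s \<Rightarrow> 'a \<Rightarrow> real) \<Rightarrow> real^('s \<times> 'a)^('s \<times> 'a)" where
  "flow_mat pol = mat 1 - \<gamma> *\<^sub>R (trans_mat P ** policy_mat pol)"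

lemma invertible_flow_mat:
  assumes "stochastic_policy pol"
  shows "invertible (flow_mat pol)"
  unfolding flow_mat_def
proof (rule invertible_mat_1_minus_scaleR)
  show "(\<Sum>j\<in>UNIV. \<bar>(trans_mat P ** policy_mat pol) $ k $ j\<bar>) \<le> 1" for k
    using assms P_nonneg P_stoch
    by (simp add: sum_UNIV_prod trans_mat_policy_mat_entry stochastic_policy_def flip: sum_distrib_left)
qed (use gamma_nonneg gamma_less_1 in auto)

lemma vector_matrix_mult_flow_mat:
  "(x v* flow_mat pol) $ (s, a)
     = x $ (s, a) - \<gamma> * (\<Sum>k\<in>UNIV. x$k * P k s) * pol s a"
proof -
  have "(x v* flow_mat pol) $ (s, a)
      = (\<Sum>k\<in>UNIV. x$k * (if k = (s, a) then 1 else 0) - x$k * (\<gamma> * (P k s * pol s a)))"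
    by (simp add: flow_mat_def vector_matrix_mult_def mat_def trans_mat_policy_mat_entry
        right_diff_distrib)
  also have "\<dots> = x $ (s, a) - (\<Sum>k\<in>UNIV. x$k * (\<gamma> * (P k s * pol s a)))"
    by (simp add: sum_subtractf if_distrib[where f="\<lambda>y. _ * y"] cong: if_cong)
  finally show ?thesis
    by (simp add: sum_distrib_left sum_distrib_right mult_ac)
qed

lemma sa_prob_nonneg:
  assumes "stochastic_policy pol"
  shows "0 \<le> sa_prob mu0 P pol n sa"
proof (induction n arbitrary: sa)
  case 0
  show ?case
    using assms mu0_nonneg by (cases sa) (simp add: stochastic_policy_def)
next
  case (Suc n)
  show ?case
    using assms
    by (cases sa)
      (auto simp: stochastic_policy_def intro!: mult_nonneg_nonneg sum_nonneg Suc.IH P_nonneg)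
qed

lemma sum_sa_prob:
  assumes "stochastic_policy pol"
  shows "(\<Sum>sa\<in>UNIV. sa_prob mu0 P pol n sa) = 1"
proof (induction n)
  case 0
  show ?case
    using assms mu0_sum by (simp add: sum_UNIV_prod stochastic_policy_def flip: sum_distrib_left)
next
  case (Suc n)
  have "(\<Sum>sa\<in>UNIV. sa_prob mu0 P pol (Suc n) sa)
      = (\<Sum>s'\<in>UNIV. \<Sum>sa\<in>UNIV. sa_prob mu0 P pol n sa * P sa s')"
    using assms by (simp add: sum_UNIV_prod stochastic_policy_def flip: sum_distrib_left)
  also have "\<dots> = (\<Sum>sa\<in>UNIV. sa_prob mu0 P pol n sa * (\<Sum>s'\<in>UNIV. P sa s'))"
    by (subst sum.swap) (simp add: sum_distrib_left)
  finally show ?case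
    using Suc by (simp add: P_stoch)
qed

lemma sa_prob_le_1:
  assumes "stochastic_policy pol"
  shows "sa_prob mu0 P pol n sa \<le> 1"
  using member_le_sum[of sa UNIV "sa_prob mu0 P pol n"] sa_prob_nonneg[OF assms] sum_sa_prob[OF assms]
  by simp

lemma summable_discounted_sa_prob:
  assumes "stochastic_policy pol"
  shows "summable (\<lambda>n. \<gamma>^n * sa_prob mu0 P pol n sa)"
proof (rule summable_comparison_test)
  show "summable (\<lambda>n. \<gamma>^n)"
    using gamma_nonneg gamma_less_1 by simp
  show "\<exists>N. \<forall>n\<ge>N. norm (\<gamma>^n * sa_prob mu0 P pol n sa) \<le> \<gamma>^n"
  proof (intro exI allI impI)
    fix n
    show "norm (\<gamma>^n * sa_prob mu0 P pol n sa) \<le> \<gamma>^n"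
      using gamma_nonneg sa_prob_nonneg[OF assms, of n sa] sa_prob_le_1[OF assms, of n sa]
      by (simp add: abs_mult mult_left_le)
  qed
qed

lemma visit_nonneg:
  assumes "stochastic_policy pol"
  shows "0 \<le> visit \<gamma> mu0 P pol $ sa"
  unfolding visit_def
  using gamma_nonneg gamma_less_1 sa_prob_nonneg[OF assms]
  by (simp add: suminf_nonneg summable_discounted_sa_prob[OF assms])

lemma visit_le_1:
  assumes "stochastic_policy pol"
  shows "visit \<gamma> mu0 P pol $ sa \<le> 1"
proof -
  have "(\<Sum>n. \<gamma>^n * sa_prob mu0 P pol n sa) \<le> (\<Sum>n. \<gamma>^n)"
    using gamma_nonneg gamma_less_1
    by (intro suminf_le summable_discounted_sa_prob[OF assms])
      (simp_all add: mult_left_le sa_prob_le_1[OF assms])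
  also have "\<dots> = 1 / (1 - \<gamma>)"
    using gamma_nonneg gamma_less_1 by (simp add: suminf_geometric)
  finally show ?thesis
    unfolding visit_def using gamma_less_1 by (simp add: field_simps)
qed

lemma visit_bellman:
  assumes "stochastic_policy pol"
  shows "visit \<gamma> mu0 P pol $ (s, a)
    = ((1 - \<gamma>) * mu0 s + \<gamma> * (\<Sum>k\<in>UNIV. visit \<gamma> mu0 P pol $ k * P k s)) * pol s a"
proof -
  let ?p = "sa_prob mu0 P pol"
  define S where "S k = (\<Sum>n. \<gamma>^n * ?p n k)" for k
  have S: "(\<lambda>n. \<gamma>^n * ?p n k) sums S k" for k
    unfolding S_def by (rule summable_sums[OF summable_discounted_sa_prob[OF assms]])
  have "(\<lambda>n. \<gamma> * (\<Sum>k\<in>UNIV. \<gamma>^n * ?p n k * P k s) * pol s a)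
      sums (\<gamma> * (\<Sum>k\<in>UNIV. S k * P k s) * pol s a)"
    by (intro sums_mult sums_mult2 sums_sum S)
  then have "(\<lambda>n. \<gamma>^Suc n * ?p (Suc n) (s, a)) sums (\<gamma> * (\<Sum>k\<in>UNIV. S k * P k s) * pol s a)"
    by (simp add: sum_distrib_left sum_distrib_right mult_ac)
  then have "(\<lambda>n. \<gamma>^n * ?p n (s, a)) sums (\<gamma> * (\<Sum>k\<in>UNIV. S k * P k s) * pol s a + mu0 s * pol s a)"
    using sums_Suc_iff[where f="\<lambda>n. \<gamma>^n * ?p n (s, a)"] by simp
  then have S_sa: "S (s, a) = \<gamma> * (\<Sum>k\<in>UNIV. S k * P k s) * pol s a + mu0 s * pol s a"
    using S sums_unique2 by blast
  have visit: "visit \<gamma> mu0 P pol $ k = (1 - \<gamma>) * S k" for k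
    unfolding visit_def S_def by simp
  show ?thesis
    unfolding visit S_sa by (simp add: algebra_simps sum_distrib_left)
qed

lemma visit_S_bellman:
  assumes "stochastic_policy pol"
  shows "visit_S \<gamma> mu0 P pol $ s = (1 - \<gamma>) * mu0 s + \<gamma> * (\<Sum>k\<in>UNIV. visit \<gamma> mu0 P pol $ k * P k s)"
  using assms by (simp add: visit_S_def visit_bellman stochastic_policy_def flip: sum_distrib_left)

lemma visit_eq_visit_S_mult:
  assumes "stochastic_policy pol"
  shows "visit \<gamma> mu0 P pol $ (s, a) = visit_S \<gamma> mu0 P pol $ s * pol s a"
  using assms by (simp only: visit_bellman visit_S_bellman)

lemma abs_visit_S_le_card:
  assumes "stochastic_policy pol"
  shows "\<bar>visit_S \<gamma> mu0 P pol $ s\<bar> \<le> CARD('a)"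
proof -
  have "0 \<le> visit_S \<gamma> mu0 P pol $ s"
    unfolding visit_S_def by (simp add: sum_nonneg visit_nonneg[OF assms])
  moreover have "visit_S \<gamma> mu0 P pol $ s \<le> (\<Sum>a\<in>(UNIV::'a set). 1)"
    unfolding visit_S_def by (simp add: sum_mono visit_le_1[OF assms] del: sum_constant)
  ultimately show ?thesis
    by simp
qed

lemma visit_diff_eq:
  assumes pol: "stochastic_policy pol" and pol': "stochastic_policy pol'"
  shows "visit \<gamma> mu0 P pol' - visit \<gamma> mu0 P pol
    = (\<chi> k. visit_S \<gamma> mu0 P pol' $ fst k * (pol' (fst k) (snd k) - pol (fst k) (snd k)))
        v* matrix_inv (flow_mat pol)"
    (is "?d' - ?d = ?w v* _")
proof -
  have "(?d' - ?d) v* flow_mat pol = ?w"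
  proof (rule vec_eq_iff[THEN iffD2], rule allI)
    fix l :: "'s \<times> 'a"
    obtain s a where l: "l = (s, a)"
      by fastforce
    have flow: "\<gamma> * (\<Sum>k\<in>UNIV. (?d' - ?d) $ k * P k s)
        = visit_S \<gamma> mu0 P pol' $ s - visit_S \<gamma> mu0 P pol $ s"
      by (simp add: visit_S_bellman[OF pol] visit_S_bellman[OF pol'] left_diff_distrib
          sum_subtractf right_diff_distrib)
    have "((?d' - ?d) v* flow_mat pol) $ (s, a)
        = (?d' - ?d) $ (s, a) - \<gamma> * (\<Sum>k\<in>UNIV. (?d' - ?d) $ k * P k s) * pol s a"
      by (rule vector_matrix_mult_flow_mat)
    also have "\<dots> = ?w $ l"
      unfolding flow l
      by (simp add: visit_eq_visit_S_mult[OF pol] visit_eq_visit_S_mult[OF pol'] algebra_simps)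
    finally show "((?d' - ?d) v* flow_mat pol) $ l = ?w $ l"
      unfolding l .
  qed
  then have "((?d' - ?d) v* flow_mat pol) v* matrix_inv (flow_mat pol)
      = ?w v* matrix_inv (flow_mat pol)"
    by simp
  then show ?thesis
    by (simp add: vector_matrix_mul_assoc matrix_inv_right[OF invertible_flow_mat[OF pol]])
qed

lemma tendsto_visit:
  assumes pols: "\<And>t. stochastic_policy (pol t)" and pol0: "stochastic_policy pol0"
    and lim: "\<And>s a. ((\<lambda>t. pol t s a) \<longlongrightarrow> pol0 s a) F"
  shows "((\<lambda>t. visit \<gamma> mu0 P (pol t)) \<longlongrightarrow> visit \<gamma> mu0 P pol0) F"
proof (rule vec_tendstoI)
  fix l
  let ?Q = "matrix_inv (flow_mat pol0)"
  let ?bound = "\<lambda>t. \<Sum>k\<in>UNIV.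
    CARD('a) * \<bar>pol t (fst k) (snd k) - pol0 (fst k) (snd k)\<bar> * \<bar>?Q $ k $ l\<bar>"
  have "visit \<gamma> mu0 P (pol t) $ l - visit \<gamma> mu0 P pol0 $ l
      = (\<Sum>k\<in>UNIV. visit_S \<gamma> mu0 P (pol t) $ fst k
          * (pol t (fst k) (snd k) - pol0 (fst k) (snd k)) * ?Q $ k $ l)" for t
    using arg_cong[OF visit_diff_eq[OF pol0 pols], of "\<lambda>v. v $ l"]
    by (simp add: vector_matrix_mult_def mult_ac)
  then have bound: "norm (visit \<gamma> mu0 P (pol t) $ l - visit \<gamma> mu0 P pol0 $ l) \<le> ?bound t" for t
    by (auto simp: abs_mult intro!: order.trans[OF sum_abs] sum_mono mult_right_mono
        abs_visit_S_le_card[OF pols])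
  have "((\<lambda>t. pol t s a - pol0 s a) \<longlongrightarrow> 0) F" for s a
    using lim by (rule LIM_zero)
  then have "(?bound \<longlongrightarrow> 0) F"
    by (intro tendsto_null_sum tendsto_mult_right_zero tendsto_mult_left_zero tendsto_rabs_zero)
  then have "((\<lambda>t. visit \<gamma> mu0 P (pol t) $ l - visit \<gamma> mu0 P pol0 $ l) \<longlongrightarrow> 0) F"
    by (rule Lim_null_comparison[OF always_eventually[OF allI[OF bound]]])
  then show "((\<lambda>t. visit \<gamma> mu0 P (pol t) $ l) \<longlongrightarrow> visit \<gamma> mu0 P pol0 $ l) F"
    by (simp add: LIM_zero_iff)
qed

lemma has_real_derivative_visit:
  assumes pols: "\<And>t. stochastic_policy (pol t)"
    and deriv: "\<And>s a. ((\<lambda>t. pol t s a) has_real_derivative h s a) (at x)"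
  shows "((\<lambda>t. visit \<gamma> mu0 P (pol t) $ l) has_real_derivative
      (\<Sum>k\<in>UNIV. visit_S \<gamma> mu0 P (pol x) $ fst k * h (fst k) (snd k)
         * matrix_inv (flow_mat (pol x)) $ k $ l)) (at x)"
proof -
  let ?Q = "matrix_inv (flow_mat (pol x))"
  have quotient: "(visit \<gamma> mu0 P (pol t) $ l - visit \<gamma> mu0 P (pol x) $ l) / (t - x)
      = (\<Sum>k\<in>UNIV. visit_S \<gamma> mu0 P (pol t) $ fst k
          * ((pol t (fst k) (snd k) - pol x (fst k) (snd k)) / (t - x)) * ?Q $ k $ l)" for t
    using arg_cong[OF visit_diff_eq[OF pols[of x] pols[of t]], of "\<lambda>v. v $ l / (t - x)"]
    by (simp add: vector_matrix_mult_def sum_divide_distrib mult_ac)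
  have "((\<lambda>t. pol t s a) \<longlongrightarrow> pol x s a) (at x)" for s a
    using DERIV_isCont[OF deriv] by (simp add: isCont_def)
  then have "((\<lambda>t. visit \<gamma> mu0 P (pol t)) \<longlongrightarrow> visit \<gamma> mu0 P (pol x)) (at x)"
    by (rule tendsto_visit[OF pols pols])
  then have visit_S: "((\<lambda>t. visit_S \<gamma> mu0 P (pol t)) \<longlongrightarrow> visit_S \<gamma> mu0 P (pol x)) (at x)"
    unfolding visit_S_def by (intro tendsto_intros)
  have "((\<lambda>t. (pol t s a - pol x s a) / (t - x)) \<longlongrightarrow> h s a) (at x)" for s a
    using deriv by (simp add: has_field_derivative_iff)
  then show ?thesis
    unfolding has_field_derivative_iff quotient
    by (intro tendsto_intros tendsto_vec_nth[OF visit_S])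
qed

end

theorem theorem2:
  fixes pol :: "real^'p::finite \<Rightarrow> 's::finite \<Rightarrow> 'a::finite \<Rightarrow> real"
    and P :: "'s \<times> 'a \<Rightarrow> 's \<Rightarrow> real"
    and mu0 :: "'s \<Rightarrow> real"
    and \<gamma> :: real
    and \<theta> :: "real^'p"
  assumes P_nonneg: "\<And>sa s'. P sa s' \<ge> 0"
    and P_stoch: "\<And>sa. (\<Sum>s'\<in>UNIV. P sa s') = 1"
    and mu0_nonneg: "\<And>s. mu0 s \<ge> 0"
    and mu0_sum: "(\<Sum>s\<in>UNIV. mu0 s) = 1"
    and gamma: "0 \<le> \<gamma>" "\<gamma> < 1"
    and pi_nonneg: "\<And>\<theta>' s a. pol \<theta>' s a \<ge> 0"
    and pi_sum: "\<And>\<theta>' s. (\<Sum>a\<in>UNIV. pol \<theta>' s a) = 1"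
    and pi_diff: "\<And>\<theta>' s a. (\<lambda>x. pol x s a) differentiable (at \<theta>')"
  shows "let \<Psi> = mat 1 - \<gamma> *\<^sub>R (trans_mat P ** policy_mat (pol \<theta>));
             \<Upsilon> = actor_jacobian pol \<theta>
                 ** diag_mat (transpose marg_mat *v visit_S \<gamma> mu0 P (pol \<theta>))
                 ** matrix_inv \<Psi>
         in \<forall>i sa. ((\<lambda>t. visit \<gamma> mu0 P (pol (\<theta> + t *\<^sub>R axis i 1)) $ sa)
                       has_real_derivative (\<Upsilon> $ i $ sa)) (at 0)"
proof -
  interpret discounted_mdp P mu0 \<gamma>
    using assms by unfold_locales auto
  have policies: "stochastic_policy (pol \<theta>')" for \<theta>'
    using pi_nonneg pi_sum by (simp add: stochastic_policy_def)
  have "((\<lambda>t. pol (\<theta> + t *\<^sub>R axis i 1) s a)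
      has_real_derivative actor_jacobian pol \<theta> $ i $ (s, a)) (at 0)" for i s a
    using has_real_derivative_partial_deriv[OF pi_diff] by (simp add: actor_jacobian_def)
  from has_real_derivative_visit[OF policies this]
  show ?thesis
    unfolding Let_def matrix_mult_diag_marg_entry flow_mat_def[symmetric] by (simp add: mult_ac)
qed

end
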